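(* Let $a$ and $b$ be irrational numbers with $1<a<b$ and $\{a\}=\{b\}=:\theta$. Let $a_n=[an]$, $b_n=[bn]$, and for positive integers $n$ define $$h(n)=\frac{a_{n+1}}{a_n}-\frac{b_{n+1}}{b_n},\qquad f(n)=\begin{cases}1,& h(n)>0,\\ 0,&\text{otherwise},\end{cases}\qquad g(n)=[\theta(n+1)]-[\theta n].$$ Then $f(n)=g(n)$ for every positive integer $n$; that is, the infinite words $f(1)f(2)f(3)\cdots$ and $g(1)g(2)g(3)\cdots$ coincide.
   Context: $[x]$ is the greatest integer not exceeding $x$ and $\{x\}=x-[x]$. The sequence $g$ is the characteristic (Sturmian) sequence of slope $\theta$; equivalently $g(n)=1$ exactly when $n=[j/\theta]$ for some positive integer $j$. *)

theory Defs
  imports Complex_Main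
begin

definition frac_part :: "real \<Rightarrow> real" where
  "frac_part x = x - of_int \<lfloor>x\<rfloor>"

definition beatty :: "real \<Rightarrow> nat \<Rightarrow> int" where
  "beatty a n = \<lfloor>a * real n\<rfloor>"

definition h_seq :: "real \<Rightarrow> real \<Rightarrow> nat \<Rightarrow> real" where
  "h_seq a b n = of_int (beatty a (n+1)) / of_int (beatty a n)
                 - of_int (beatty b (n+1)) / of_int (beatty b n)"

definition f_seq :: "real \<Rightarrow> real \<Rightarrow> nat \<Rightarrow> int" where
  "f_seq a b n = (if h_seq a b n > 0 then 1 else 0)"

definition g_seq :: "real \<Rightarrow> nat \<Rightarrow> int" where
  "g_seq \<theta> n = \<lfloor>\<theta> * real (n+1)\<rfloor> - \<lfloor>\<theta> * real n\<rfloor>"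

end

theory Submission
  imports Defs
begin

text \<open>Write \<open>a = m + \<theta>\<close> and \<open>b = a + k\<close> with integers \<open>m \<ge> 1\<close>, \<open>k \<ge> 1\<close>, and put
  \<open>p\<^sub>n = [\<theta> n]\<close>, so that \<open>a\<^sub>n = m n + p\<^sub>n\<close> and \<open>b\<^sub>n = a\<^sub>n + k n\<close>. Then
  \<open>h(n)\<close> has the sign of \<open>a\<^sub>n\<^sub>+\<^sub>1 b\<^sub>n - b\<^sub>n\<^sub>+\<^sub>1 a\<^sub>n = k (n g(n) - p\<^sub>n)\<close>, and since
  \<open>g(n) \<in> {0, 1}\<close> and \<open>0 \<le> p\<^sub>n < n\<close>, this is positive exactly when \<open>g(n) = 1\<close>.\<close>

lemma frac_part_bounds: "0 \<le> frac_part x" "frac_part x < 1"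
  unfolding frac_part_def by linarith+

lemma beatty_add_int: "beatty (x + of_int k) n = beatty x n + k * int n"
proof -
  have "(x + of_int k) * real n = x * real n + of_int (k * int n)"
    by (simp add: algebra_simps)
  then show ?thesis
    unfolding beatty_def by (metis floor_add_int)
qed

lemma beatty_floor_frac_part: "beatty x n = \<lfloor>x\<rfloor> * int n + beatty (frac_part x) n"
  using beatty_add_int[of "frac_part x" "\<lfloor>x\<rfloor>" n]
  by (simp add: frac_part_def algebra_simps)

lemma beatty_pos:
  assumes "1 \<le> x" and "n \<ge> 1"
  shows "beatty x n > 0"
proof -
  have "1 \<le> x * real n"
    using assms mult_mono[of 1 x 1 "real n"] by simp
  then show ?thesis
    unfolding beatty_def by linarith
qed

lemma g_seq_eq_beatty_diff: "g_seq \<theta> n = beatty \<theta> (n + 1) - beatty \<theta> n"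
  unfolding g_seq_def beatty_def by simp

lemma g_seq_zero_or_one:
  assumes "0 \<le> \<theta>" and "\<theta> < 1"
  shows "g_seq \<theta> n = 0 \<or> g_seq \<theta> n = 1"
proof -
  have "\<theta> * real (n + 1) = \<theta> * real n + \<theta>"
    by (simp add: algebra_simps)
  then show ?thesis
    unfolding g_seq_def using assms by linarith
qed

lemma beatty_lt_self:
  assumes "\<theta> < 1" and "n \<ge> 1"
  shows "beatty \<theta> n < int n"
proof -
  have "\<theta> * real n < real n"
    using assms by simp
  then show ?thesis
    unfolding beatty_def by linarith
qed

lemma beatty_nonneg: "0 \<le> \<theta> \<Longrightarrow> 0 \<le> beatty \<theta> n"
  unfolding beatty_def by simp

lemma diff_divide_pos_iff:
  fixes A A' B B' :: int
  assumes "A > 0" and "B > 0"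
  shows "real_of_int A' / real_of_int A - real_of_int B' / real_of_int B > 0
         \<longleftrightarrow> A' * B - B' * A > 0"
proof -
  have "real_of_int A' / real_of_int A - real_of_int B' / real_of_int B
        = real_of_int (A' * B - B' * A) / real_of_int (A * B)"
    using assms by (simp add: diff_frac_eq)
  moreover have "real_of_int (A * B) > 0"
    using assms by simp
  ultimately show ?thesis
    by (simp add: zero_less_divide_iff flip: of_int_mult of_int_diff)
qed

lemma beatty_cross_difference:
  assumes "frac_part a = frac_part b"
  defines "p \<equiv> beatty (frac_part a)"
  shows "beatty a (n + 1) * beatty b n - beatty b (n + 1) * beatty a n
         = (\<lfloor>b\<rfloor> - \<lfloor>a\<rfloor>) * (int n * g_seq (frac_part a) n - p n)"
proof -
  have "b = a + of_int (\<lfloor>b\<rfloor> - \<lfloor>a\<rfloor>)"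
    using assms(1) unfolding frac_part_def by simp
  then have "beatty b j = beatty a j + (\<lfloor>b\<rfloor> - \<lfloor>a\<rfloor>) * int j" for j
    by (metis beatty_add_int)
  moreover have "beatty a j = \<lfloor>a\<rfloor> * int j + p j" for j
    unfolding p_def by (rule beatty_floor_frac_part)
  ultimately show ?thesis
    unfolding g_seq_eq_beatty_diff p_def[symmetric] by (simp add: algebra_simps)
qed

theorem theorem5:
  fixes a b :: real
  assumes "a \<notin> \<rat>" and "b \<notin> \<rat>"
    and "1 < a" and "a < b"
    and "frac_part a = frac_part b"
  shows "\<forall>n::nat. n \<ge> 1 \<longrightarrow> f_seq a b n = g_seq (frac_part a) n"
proof (intro allI impI)
  fix n :: nat
  assume n: "n \<ge> 1"
  define \<theta> where "\<theta> = frac_part a"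
  have k: "\<lfloor>b\<rfloor> - \<lfloor>a\<rfloor> > 0"
    using assms(4,5) unfolding frac_part_def by linarith
  have p: "0 \<le> beatty \<theta> n" "beatty \<theta> n < int n"
    using frac_part_bounds beatty_nonneg beatty_lt_self n unfolding \<theta>_def by blast+
  have "h_seq a b n > 0 \<longleftrightarrow>
        beatty a (n + 1) * beatty b n - beatty b (n + 1) * beatty a n > 0"
    unfolding h_seq_def using beatty_pos assms(3,4) n by (intro diff_divide_pos_iff) auto
  also have "\<dots> \<longleftrightarrow> int n * g_seq \<theta> n - beatty \<theta> n > 0"
    unfolding beatty_cross_difference[OF assms(5)] \<theta>_def using k by (simp add: zero_less_mult_iff)
  also have "\<dots> \<longleftrightarrow> g_seq \<theta> n = 1"
    using g_seq_zero_or_one[OF frac_part_bounds, of a n] p unfolding \<theta>_def by auto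
  finally show "f_seq a b n = g_seq (frac_part a) n"
    using g_seq_zero_or_one[OF frac_part_bounds, of a n]
    unfolding f_seq_def \<theta>_def by auto
qed

end
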